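(* Let $W:\mathcal{X}\to\mathcal{Y}$ be a channel with $\mathcal{Y}$ finite, let $n\in\mathbb{N}$, $0<\delta\le\sqrt{n}\log|\mathcal{Y}|$, and let $x^n,x'^n\in\mathcal{X}^n$ satisfy $1-\frac12\|W_{x^n}-W_{x'^n}\|_1\le\epsilon$. Then \[ W_{x'^n}(\mathcal{T}^\delta_{x^n})\le 2\exp\!\left(-\delta^2/36K(|\mathcal{Y}|)\right)+\epsilon\left(1+2^{2\delta\sqrt{n}}\,2^{H(W_{x^n})-H(W_{x'^n})}\right). \]
   Context: A channel $W:\mathcal{X}\to\mathcal{Y}$ ($\mathcal{X}$ a measurable space) is a measurable map $x\mapsto W_x\in\mathcal{P}(\mathcal{Y})$; $W_{x^n}(y^n)=\prod_{i=1}^nW_{x_i}(y_i)$. Logarithms and exponentials are base 2. $\|P-Q\|_1=\sum_y|P(y)-Q(y)|$. $H$ denotes Shannon entropy (base 2), so $H(W_{x^n})=\sum_iH(W_{x_i})$. The conditional typical set is $\mathcal{T}^\delta_{x^n}=\{y^n\in\mathcal{Y}^n:|\log W_{x^n}(y^n)+H(W_{x^n})|\le\delta\sqrt{n}\}$, and $K(d)=(\log\max\{d,3\})^2$. *)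

theory Defs
  imports "HOL-Analysis.Analysis"
begin

text \<open>A channel from a measurable space X to a finite alphabet 'y:
  x \<mapsto> W x, each W x a probability distribution on 'y, measurable in x.
  (For finite 'y, measurability into P('y) is measurability of each coordinate.)\<close>
definition channel :: "'x measure \<Rightarrow> ('x \<Rightarrow> 'y::finite \<Rightarrow> real) \<Rightarrow> bool" where
  "channel X W \<longleftrightarrow>
     (\<forall>x \<in> space X. (\<forall>y. W x y \<ge> 0) \<and> (\<Sum>y\<in>UNIV. W x y) = 1) \<and>
     (\<forall>y. (\<lambda>x. W x y) \<in> borel_measurable X)"

definition prod_chan :: "('x \<Rightarrow> 'y \<Rightarrow> real) \<Rightarrow> 'x list \<Rightarrow> 'y list \<Rightarrow> real" where
  "prod_chan W xs ys = (\<Prod>i<length xs. W (xs ! i) (ys ! i))"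

text \<open>Shannon entropy in base 2 (0 log 0 = 0, automatic since log 2 0 = 0 in Isabelle).\<close>
definition entropy2 :: "('y::finite \<Rightarrow> real) \<Rightarrow> real" where
  "entropy2 P = - (\<Sum>y\<in>UNIV. P y * log 2 (P y))"

definition entropy_prod :: "('x \<Rightarrow> 'y::finite \<Rightarrow> real) \<Rightarrow> 'x list \<Rightarrow> real" where
  "entropy_prod W xs = (\<Sum>i<length xs. entropy2 (W (xs ! i)))"

text \<open>Conditional typical set; sequences of probability zero have log W = -infinity
  and hence are never typical.\<close>
definition typical_set :: "('x \<Rightarrow> 'y::finite \<Rightarrow> real) \<Rightarrow> real \<Rightarrow> 'x list \<Rightarrow> 'y list set" where
  "typical_set W \<delta> xs = {ys. length ys = length xs \<and> prod_chan W xs ys > 0 \<and>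
      \<bar>log 2 (prod_chan W xs ys) + entropy_prod W xs\<bar> \<le> \<delta> * sqrt (real (length xs))}"

definition l1_dist_prod :: "('x \<Rightarrow> 'y::finite \<Rightarrow> real) \<Rightarrow> 'x list \<Rightarrow> 'x list \<Rightarrow> real" where
  "l1_dist_prod W xs xs' =
     (\<Sum>ys\<in>{ys. length ys = length xs}. \<bar>prod_chan W xs ys - prod_chan W xs' ys\<bar>)"

definition Kfun :: "real \<Rightarrow> real" where
  "Kfun d = (log 2 (max d 3))\<^sup>2"

end

theory Submission
  imports Defs
begin

(* On the typical set of x^n one has W_{x^n}(y^n) >= 2^(-H(W_{x^n}) - t), where t = delta sqrt n.
   Split the typical y^n at the threshold theta = 2^(t - H(W_{x'^n})). Below theta,
   W_{x'^n}(y^n) <= c W_{x^n}(y^n) with c = 2^(2t) 2^(H(W_{x^n}) - H(W_{x'^n})), so W_{x'^n}(y^n) is at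
   most (1 + c) min(W_{x^n}(y^n), W_{x'^n}(y^n)), and these minima sum to
   1 - ||W_{x^n} - W_{x'^n}||_1 / 2 <= epsilon.
   Above theta, a Chernoff bound with exponent l >= 0 controls the mass by
   theta^(-l) prod_i sum_y W_{x'_i}(y)^(1+l). The second order Taylor bound for exp on (-inf, 0]
   and the estimate sum_y q ln^2 q <= 18 ln 2 K(|Y|) bound each factor by
   exp(-l ln 2 H(W_{x'_i}) + 9 l^2 ln 2 K(|Y|)); optimising l gives 2^(-delta^2 / 36 K(|Y|)). *)

lemma exp_le_second_order_Taylor:
  fixes x :: real
  assumes "x \<le> 0"
  shows "exp x \<le> 1 + x + x\<^sup>2 / 2"
proof -
  obtain t where "exp x = (\<Sum>m<3. x ^ m / fact m) + exp t / fact 3 * x ^ 3"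
    using Maclaurin_exp_le [of x 3] by blast
  also have "\<dots> = 1 + x + x\<^sup>2 / 2 + exp t / 6 * x ^ 3"
    by (simp add: numeral_3_eq_3 power2_eq_square fact_numeral)
  also have "exp t / 6 * x ^ 3 \<le> 0"
    using assms by (intro mult_nonneg_nonpos) (auto simp: power_le_zero_eq)
  finally show ?thesis by simp
qed

lemma mult_ln_squared_le_sqrt:
  fixes x :: real
  assumes "0 < x" "x \<le> 1"
  shows "x * (ln x)\<^sup>2 \<le> 16 * sqrt x"
proof -
  have "- ln x = ln (1 / x)" using assms by (simp add: ln_div)
  also have "\<dots> \<le> (1 / x) powr (1 / 4) / (1 / 4)"
    using assms by (intro ln_powr_bound) auto
  finally have "- ln x \<le> 4 * (1 / x) powr (1 / 4)" by simp
  moreover have "0 \<le> - ln x" using assms by simp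
  ultimately have "(- ln x)\<^sup>2 \<le> (4 * (1 / x) powr (1 / 4))\<^sup>2"
    by (rule power_mono)
  also have "\<dots> = 16 * (1 / x) powr (1 / 2)"
    using assms by (simp add: power_mult_distrib powr_power)
  also have "\<dots> = 16 / sqrt x"
    using assms by (simp add: powr_half_sqrt real_sqrt_divide)
  finally have "(ln x)\<^sup>2 \<le> 16 / sqrt x" by simp
  then have "x * (ln x)\<^sup>2 \<le> x * (16 / sqrt x)"
    using assms by (intro mult_left_mono) auto
  also have "x * (16 / sqrt x) = 16 * sqrt x"
    using assms by (simp add: field_simps flip: real_sqrt_mult)
  finally show ?thesis .
qed

lemma mult_ln_squared_le:
  fixes x D :: real
  assumes "0 \<le> x" "x \<le> 1" "1 \<le> D"
  shows "x * (ln x)\<^sup>2 \<le> 4 * (ln D)\<^sup>2 * x + 16 / D"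
proof (cases "1 / D\<^sup>2 \<le> x")
  case True
  moreover have "0 < 1 / D\<^sup>2" using assms(3) by simp
  ultimately have "0 < x" by linarith
  have "- 2 * ln D = ln (1 / D\<^sup>2)" using assms(3) by (simp add: ln_div ln_realpow)
  also have "\<dots> \<le> ln x" using True \<open>0 < x\<close> assms(3) by simp
  finally have "(- ln x)\<^sup>2 \<le> (2 * ln D)\<^sup>2"
    using \<open>0 < x\<close> assms(2) by (intro power_mono) auto
  then have "x * (ln x)\<^sup>2 \<le> x * (4 * (ln D)\<^sup>2)"
    using assms(1) by (intro mult_left_mono) (auto simp: power_mult_distrib)
  moreover have "0 \<le> 16 / D" using assms(3) by simp
  ultimately show ?thesis by (simp add: mult.commute add_increasing2)
next
  case False
  show ?thesis
  proof (cases "x = 0")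
    case False
    then have "x * (ln x)\<^sup>2 \<le> 16 * sqrt x"
      using assms by (intro mult_ln_squared_le_sqrt) auto
    also have "sqrt x \<le> sqrt (1 / D\<^sup>2)"
      using \<open>\<not> 1 / D\<^sup>2 \<le> x\<close> by simp
    also have "sqrt (1 / D\<^sup>2) = 1 / D"
      using assms(3) by (simp add: real_sqrt_divide)
    finally show ?thesis using assms by (simp add: add_increasing)
  qed (use assms(3) in simp)
qed

lemma sum_mult_ln_squared_le:
  fixes q :: "'y::finite \<Rightarrow> real"
  assumes nonneg: "\<And>y. 0 \<le> q y" and sum_one: "sum q UNIV = 1"
  shows "(\<Sum>y\<in>UNIV. q y * (ln (q y))\<^sup>2) \<le> 18 * ln 2 * Kfun (real CARD('y))"
proof -
  define D where "D = max (real CARD('y)) 3"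
  have "3 \<le> D" "real CARD('y) \<le> D" by (auto simp: D_def)
  have "exp 1 \<le> D" using exp_le \<open>3 \<le> D\<close> by linarith
  then have "ln (exp 1) \<le> ln D" using \<open>3 \<le> D\<close> by (subst ln_le_cancel_iff) auto
  then have "1 \<le> ln D" by simp
  have "q y \<le> 1" for y
    using member_le_sum[of y UNIV q] nonneg sum_one by auto
  then have "(\<Sum>y\<in>UNIV. q y * (ln (q y))\<^sup>2) \<le> (\<Sum>y\<in>UNIV. 4 * (ln D)\<^sup>2 * q y + 16 / D)"
    using nonneg \<open>3 \<le> D\<close> by (intro sum_mono mult_ln_squared_le) auto
  also have "\<dots> = 4 * (ln D)\<^sup>2 + 16 * (real CARD('y) / D)"
    by (simp add: sum.distrib sum_one flip: sum_distrib_left)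
  also have "\<dots> \<le> 4 * (ln D)\<^sup>2 + 16 * (ln D)\<^sup>2"
  proof -
    have "real CARD('y) / D \<le> 1" using \<open>real CARD('y) \<le> D\<close> \<open>3 \<le> D\<close> by simp
    also have "1 \<le> (ln D)\<^sup>2" using \<open>1 \<le> ln D\<close> by (simp add: one_le_power)
    finally show ?thesis by simp
  qed
  also have "\<dots> \<le> 18 / ln 2 * (ln D)\<^sup>2"
  proof -
    have "20 * ln 2 \<le> (18::real)" using ln2_le_25_over_36 by simp
    then have "20 \<le> 18 / ln (2::real)" by (simp add: le_divide_eq)
    then have "20 * (ln D)\<^sup>2 \<le> 18 / ln 2 * (ln D)\<^sup>2" by (intro mult_right_mono) auto
    then show ?thesis by simp
  qed
  also have "\<dots> = 18 * ln 2 * (ln D / ln 2)\<^sup>2"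
    by (simp add: power2_eq_square)
  also have "\<dots> = 18 * ln 2 * Kfun (real CARD('y))"
    by (simp add: Kfun_def D_def log_def)
  finally show ?thesis .
qed

lemma sum_powr_le_exp_entropy:
  fixes q :: "'y::finite \<Rightarrow> real"
  assumes nonneg: "\<And>y. 0 \<le> q y" and sum_one: "sum q UNIV = 1"
    and "0 \<le> l" and second_moment: "(\<Sum>y\<in>UNIV. q y * (ln (q y))\<^sup>2) \<le> M"
  shows "(\<Sum>y\<in>UNIV. q y powr (1 + l)) \<le> exp (- l * ln 2 * entropy2 q + l\<^sup>2 * M / 2)"
proof -
  have q_le: "q y powr (1 + l) \<le> q y + l * (q y * ln (q y)) + l\<^sup>2 / 2 * (q y * (ln (q y))\<^sup>2)"
    for y
  proof (cases "q y = 0")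
    case False
    then have "0 < q y" using nonneg[of y] by simp
    moreover have "q y \<le> 1"
      using member_le_sum[of y UNIV q] nonneg sum_one by auto
    ultimately have "exp (l * ln (q y)) \<le> 1 + l * ln (q y) + (l * ln (q y))\<^sup>2 / 2"
      using \<open>0 \<le> l\<close> by (intro exp_le_second_order_Taylor mult_nonneg_nonpos) auto
    then have "q y * exp (l * ln (q y)) \<le> q y * (1 + l * ln (q y) + (l * ln (q y))\<^sup>2 / 2)"
      using \<open>0 < q y\<close> by (intro mult_left_mono) auto
    moreover have "q y powr (1 + l) = q y * exp (l * ln (q y))"
      using \<open>0 < q y\<close> by (simp add: powr_def distrib_right exp_add)
    ultimately show ?thesis by (simp add: algebra_simps power_mult_distrib)
  qed simp
  have "(\<Sum>y\<in>UNIV. q y powr (1 + l))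
      \<le> 1 + l * (\<Sum>y\<in>UNIV. q y * ln (q y)) + l\<^sup>2 / 2 * (\<Sum>y\<in>UNIV. q y * (ln (q y))\<^sup>2)"
    using sum_mono[of UNIV _ "\<lambda>y. q y + l * (q y * ln (q y)) + l\<^sup>2 / 2 * (q y * (ln (q y))\<^sup>2)", OF q_le]
    by (simp add: sum.distrib sum_one sum_distrib_left)
  also have "(\<Sum>y\<in>UNIV. q y * ln (q y)) = - ln 2 * entropy2 q"
    by (simp add: entropy2_def log_def flip: sum_divide_distrib)
  also have "l\<^sup>2 / 2 * (\<Sum>y\<in>UNIV. q y * (ln (q y))\<^sup>2) \<le> l\<^sup>2 / 2 * M"
    using second_moment by (intro mult_left_mono) auto
  also have "1 + l * (- ln 2 * entropy2 q) + l\<^sup>2 / 2 * M \<le> exp (- l * ln 2 * entropy2 q + l\<^sup>2 * M / 2)"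
    using exp_ge_add_one_self[of "- l * ln 2 * entropy2 q + l\<^sup>2 * M / 2"] by (simp add: algebra_simps)
  finally show ?thesis by simp
qed

lemma sum_lists_length_prod:
  fixes f :: "nat \<Rightarrow> 'y::finite \<Rightarrow> 'a::comm_semiring_1"
  shows "(\<Sum>ys\<in>{ys. length ys = n}. \<Prod>i<n. f i (ys ! i)) = (\<Prod>i<n. \<Sum>y\<in>UNIV. f i y)"
proof (induction n arbitrary: f)
  case 0
  have "{ys::'y list. length ys = 0} = {[]}" by auto
  then show ?case by simp
next
  case (Suc n)
  let ?S = "{ys::'y list. length ys = n}"
  have lists_Suc: "{ys::'y list. length ys = Suc n} = (\<lambda>(y, ys). y # ys) ` (UNIV \<times> ?S)"
    by (auto simp: length_Suc_conv)
  have "inj_on (\<lambda>(y, ys). y # ys) (UNIV \<times> ?S)" by (auto simp: inj_on_def)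
  then have "(\<Sum>ys\<in>{ys. length ys = Suc n}. \<Prod>i<Suc n. f i (ys ! i))
      = (\<Sum>(y, ys)\<in>UNIV \<times> ?S. f 0 y * (\<Prod>i<n. f (Suc i) (ys ! i)))"
    unfolding lists_Suc
    by (simp add: sum.reindex prod.lessThan_Suc_shift del: prod.lessThan_Suc)
       (simp add: case_prod_unfold)
  also have "\<dots> = (\<Sum>y\<in>UNIV. f 0 y) * (\<Sum>ys\<in>?S. \<Prod>i<n. f (Suc i) (ys ! i))"
    by (simp add: sum.cartesian_product sum_product)
  also have "\<dots> = (\<Prod>i<Suc n. \<Sum>y\<in>UNIV. f i y)"
    using Suc.IH[of "\<lambda>i. f (Suc i)"] by (simp add: prod.lessThan_Suc_shift del: prod.lessThan_Suc)
  finally show ?case .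
qed

lemma sum_above_threshold_le_powr:
  fixes f :: "'a \<Rightarrow> real"
  assumes "\<And>a. a \<in> A \<Longrightarrow> 0 \<le> f a" "0 < \<theta>" "0 \<le> l"
  shows "(\<Sum>a\<in>A. if \<theta> < f a then f a else 0) \<le> \<theta> powr (- l) * (\<Sum>a\<in>A. f a powr (1 + l))"
proof -
  have "(if \<theta> < f a then f a else 0) \<le> \<theta> powr (- l) * f a powr (1 + l)" if "a \<in> A" for a
  proof (cases "\<theta> < f a")
    case True
    then have "0 < f a" using \<open>0 < \<theta>\<close> by simp
    have "\<theta> powr l \<le> f a powr l" using True assms(2,3) by (intro powr_mono2) auto
    then have "f a * 1 \<le> f a * (\<theta> powr (- l) * f a powr l)"
      using \<open>0 < f a\<close> \<open>0 < \<theta>\<close> by (intro mult_left_mono) (auto simp: powr_minus field_simps)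
    then show ?thesis using True \<open>0 < f a\<close> by (simp add: powr_add mult_ac)
  qed (use assms(1) that in simp)
  then show ?thesis by (simp add: sum_distrib_left sum_mono)
qed

lemma sum_min_eq_one_minus_half_dist:
  fixes P Q :: "'a \<Rightarrow> real"
  assumes "sum P A = 1" "sum Q A = 1"
  shows "(\<Sum>a\<in>A. min (P a) (Q a)) = 1 - (\<Sum>a\<in>A. \<bar>P a - Q a\<bar>) / 2"
proof -
  have "(\<Sum>a\<in>A. min (P a) (Q a)) = (\<Sum>a\<in>A. (P a + Q a - \<bar>P a - Q a\<bar>) / 2)"
    by (intro sum.cong) auto
  also have "\<dots> = (sum P A + sum Q A - (\<Sum>a\<in>A. \<bar>P a - Q a\<bar>)) / 2"
    by (simp only: sum_divide_distrib[symmetric] sum_subtractf sum.distrib)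
  finally show ?thesis using assms by simp
qed

lemma le_one_plus_mult_min_plus_excess:
  fixes p q c \<theta> :: real
  assumes "0 \<le> p" "0 \<le> q" "0 \<le> c" "\<theta> \<le> c * p"
  shows "q \<le> (1 + c) * min p q + (if \<theta> < q then q else 0)"
  using assms by (auto simp: min_def algebra_simps intro: add_nonneg_nonneg mult_nonneg_nonneg)

lemma channel_nonneg: "channel X W \<Longrightarrow> x \<in> space X \<Longrightarrow> 0 \<le> W x y"
  by (simp add: channel_def)

lemma channel_sum_eq_1: "channel X W \<Longrightarrow> x \<in> space X \<Longrightarrow> (\<Sum>y\<in>UNIV. W x y) = 1"
  by (simp add: channel_def)

lemma prod_chan_nonneg:
  assumes "channel X W" "set xs \<subseteq> space X"
  shows "0 \<le> prod_chan W xs ys"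
  unfolding prod_chan_def
  by (auto intro!: prod_nonneg channel_nonneg[OF assms(1)] subsetD[OF assms(2)])

lemma sum_prod_chan_powr:
  assumes "channel X W" "set xs \<subseteq> space X"
  shows "(\<Sum>ys\<in>{ys. length ys = length xs}. prod_chan W xs ys powr r)
    = (\<Prod>i<length xs. \<Sum>y\<in>UNIV. W (xs ! i) y powr r)"
proof -
  have "prod_chan W xs ys powr r = (\<Prod>i<length xs. W (xs ! i) (ys ! i) powr r)" for ys
    unfolding prod_chan_def
    by (auto intro!: prod_powr_distrib channel_nonneg[OF assms(1)] subsetD[OF assms(2)])
  then show ?thesis by (simp add: sum_lists_length_prod[of "\<lambda>i y. W (xs ! i) y powr r"])
qed

lemma sum_prod_chan:
  assumes "channel X W" "set xs \<subseteq> space X"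
  shows "(\<Sum>ys\<in>{ys. length ys = length xs}. prod_chan W xs ys) = 1"
  unfolding prod_chan_def sum_lists_length_prod[of "\<lambda>i. W (xs ! i)"]
  by (auto intro!: prod.neutral channel_sum_eq_1[OF assms(1)] subsetD[OF assms(2)])

lemma prod_chan_ge_if_typical:
  assumes "ys \<in> typical_set W \<delta> xs"
  shows "2 powr (- entropy_prod W xs - \<delta> * sqrt (real (length xs))) \<le> prod_chan W xs ys"
proof -
  have "0 < prod_chan W xs ys"
    and "- entropy_prod W xs - \<delta> * sqrt (real (length xs)) \<le> log 2 (prod_chan W xs ys)"
    using assms by (auto simp: typical_set_def)
  then have "2 powr (- entropy_prod W xs - \<delta> * sqrt (real (length xs)))
      \<le> 2 powr (log 2 (prod_chan W xs ys))"
    by (intro powr_mono) auto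
  then show ?thesis using \<open>0 < prod_chan W xs ys\<close> by simp
qed

lemma sum_min_prod_chan:
  assumes "channel X W" "set xs \<subseteq> space X" "set xs' \<subseteq> space X" "length xs' = length xs"
  shows "(\<Sum>ys\<in>{ys. length ys = length xs}. min (prod_chan W xs ys) (prod_chan W xs' ys))
    = 1 - l1_dist_prod W xs xs' / 2"
  using assms sum_prod_chan[OF assms(1,2)] sum_prod_chan[OF assms(1,3)]
  by (simp add: sum_min_eq_one_minus_half_dist l1_dist_prod_def)

lemma prod_chan_upper_tail_le_exp:
  assumes "channel X W" "set xs \<subseteq> space X" "0 \<le> t" "0 < M"
    and second_moment: "\<And>x. x \<in> set xs \<Longrightarrow> (\<Sum>y\<in>UNIV. W x y * (ln (W x y))\<^sup>2) \<le> M"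
  shows "(\<Sum>ys\<in>{ys. length ys = length xs}.
      if 2 powr (t - entropy_prod W xs) < prod_chan W xs ys then prod_chan W xs ys else 0)
    \<le> exp (- (ln 2 * t)\<^sup>2 / (2 * real (length xs) * M))"
proof -
  define n where "n = length xs"
  define H where "H = entropy_prod W xs"
  \<comment> \<open>the Chernoff exponent minimising \<open>- l ln 2 t + n l\<^sup>2 M / 2\<close>; it is \<open>0\<close> if \<open>n = 0\<close>\<close>
  define l where "l = ln 2 * t / (real n * M)"
  have "0 \<le> l" using assms(3,4) by (simp add: l_def)
  have "xs ! i \<in> space X" if "i < n" for i using assms(2) that by (auto simp: n_def)
  then have letter: "(\<Sum>y\<in>UNIV. W (xs ! i) y powr (1 + l))
      \<le> exp (- l * ln 2 * entropy2 (W (xs ! i)) + l\<^sup>2 * M / 2)" if "i < n" for i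
    using that \<open>0 \<le> l\<close> channel_nonneg[OF assms(1)] channel_sum_eq_1[OF assms(1)] second_moment
    by (intro sum_powr_le_exp_entropy) (auto simp: n_def)
  have "(\<Sum>ys\<in>{ys. length ys = n}. if 2 powr (t - H) < prod_chan W xs ys then prod_chan W xs ys else 0)
      \<le> (2 powr (t - H)) powr (- l) * (\<Sum>ys\<in>{ys. length ys = n}. prod_chan W xs ys powr (1 + l))"
    using \<open>0 \<le> l\<close> prod_chan_nonneg[OF assms(1,2)] by (intro sum_above_threshold_le_powr) auto
  also have "\<dots> = exp (- l * ln 2 * (t - H)) * (\<Prod>i<n. \<Sum>y\<in>UNIV. W (xs ! i) y powr (1 + l))"
    using sum_prod_chan_powr[OF assms(1,2)] by (simp add: n_def powr_powr powr_def mult_ac)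
  also have "\<dots> \<le> exp (- l * ln 2 * (t - H)) * (\<Prod>i<n. exp (- l * ln 2 * entropy2 (W (xs ! i)) + l\<^sup>2 * M / 2))"
    using letter by (intro mult_left_mono prod_mono) (auto intro: sum_nonneg)
  also have "\<dots> = exp (- l * ln 2 * (t - H)) * exp (- l * ln 2 * H + real n * l\<^sup>2 * M / 2)"
    by (simp add: H_def n_def entropy_prod_def sum_subtractf sum_negf sum_distrib_left flip: exp_sum)
  also have "\<dots> = exp (- l * ln 2 * t + real n * l\<^sup>2 * M / 2)"
    by (simp add: algebra_simps flip: exp_add)
  also have "- l * ln 2 * t + real n * l\<^sup>2 * M / 2 = - (ln 2 * t)\<^sup>2 / (2 * real n * M)"
    using assms(4) by (cases "n = 0") (auto simp: l_def field_simps power2_eq_square)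
  finally show ?thesis by (simp add: n_def H_def)
qed

lemma Kfun_pos: "0 < Kfun d"
proof -
  have "0 < log 2 (max d 3)" by (simp add: max_def)
  then show ?thesis unfolding Kfun_def by (rule zero_less_power)
qed

lemma prod_chan_upper_tail_le_Kfun:
  fixes W :: "'x \<Rightarrow> 'y::finite \<Rightarrow> real"
  assumes "channel X W" "set xs \<subseteq> space X" "0 \<le> \<delta>" "xs \<noteq> []"
  shows "(\<Sum>ys\<in>{ys. length ys = length xs}.
      if 2 powr (\<delta> * sqrt (real (length xs)) - entropy_prod W xs) < prod_chan W xs ys
      then prod_chan W xs ys else 0)
    \<le> 2 powr (- \<delta>\<^sup>2 / (36 * Kfun (real CARD('y))))"
proof -
  define K where "K = Kfun (real CARD('y))"
  have "0 < K" by (simp add: K_def Kfun_pos)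
  have "(\<Sum>y\<in>UNIV. W x y * (ln (W x y))\<^sup>2) \<le> 18 * ln 2 * K" if "x \<in> set xs" for x
    using that assms(2) channel_nonneg[OF assms(1)] channel_sum_eq_1[OF assms(1)]
    by (auto simp: K_def intro!: sum_mult_ln_squared_le)
  then have "(\<Sum>ys\<in>{ys. length ys = length xs}.
      if 2 powr (\<delta> * sqrt (real (length xs)) - entropy_prod W xs) < prod_chan W xs ys
      then prod_chan W xs ys else 0)
    \<le> exp (- (ln 2 * (\<delta> * sqrt (real (length xs))))\<^sup>2 / (2 * real (length xs) * (18 * ln 2 * K)))"
    using assms \<open>0 < K\<close> by (intro prod_chan_upper_tail_le_exp) auto
  also have "\<dots> = 2 powr (- \<delta>\<^sup>2 / (36 * K))"
    using assms(4) \<open>0 < K\<close>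
    by (simp add: powr_def power_mult_distrib field_simps power2_eq_square[of "ln 2"])
  finally show ?thesis by (simp only: K_def)
qed

lemma sum_typical_le_overlap_plus_tail:
  assumes "channel X W" "set xs \<subseteq> space X" "set xs' \<subseteq> space X" "length xs' = length xs"
    and "0 \<le> c" "\<theta> \<le> c * 2 powr (- entropy_prod W xs - \<delta> * sqrt (real (length xs)))"
  shows "(\<Sum>ys\<in>typical_set W \<delta> xs. prod_chan W xs' ys)
    \<le> (1 + c) * (1 - l1_dist_prod W xs xs' / 2)
      + (\<Sum>ys\<in>{ys. length ys = length xs}. if \<theta> < prod_chan W xs' ys then prod_chan W xs' ys else 0)"
proof -
  let ?S = "{ys::'b list. length ys = length xs}"
  have "typical_set W \<delta> xs \<subseteq> ?S" by (auto simp: typical_set_def)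
  have "finite ?S" using finite_lists_length_eq[of "UNIV :: 'b set" "length xs"] by simp
  have "0 \<le> prod_chan W xs ys" "0 \<le> prod_chan W xs' ys" for ys
    using assms(1-3) by (auto intro: prod_chan_nonneg)
  have "(\<Sum>ys\<in>typical_set W \<delta> xs. prod_chan W xs' ys)
      \<le> (\<Sum>ys\<in>typical_set W \<delta> xs. (1 + c) * min (prod_chan W xs ys) (prod_chan W xs' ys)
          + (if \<theta> < prod_chan W xs' ys then prod_chan W xs' ys else 0))"
    using assms(5) \<open>\<And>ys. 0 \<le> prod_chan W xs ys\<close> \<open>\<And>ys. 0 \<le> prod_chan W xs' ys\<close>
    by (intro sum_mono le_one_plus_mult_min_plus_excess order.trans[OF assms(6)] mult_left_mono
        prod_chan_ge_if_typical) auto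
  also have "\<dots> \<le> (\<Sum>ys\<in>?S. (1 + c) * min (prod_chan W xs ys) (prod_chan W xs' ys)
          + (if \<theta> < prod_chan W xs' ys then prod_chan W xs' ys else 0))"
    using \<open>typical_set W \<delta> xs \<subseteq> ?S\<close> \<open>finite ?S\<close> assms(5)
      \<open>\<And>ys. 0 \<le> prod_chan W xs ys\<close> \<open>\<And>ys. 0 \<le> prod_chan W xs' ys\<close>
    by (intro sum_mono2) auto
  finally show ?thesis
    using sum_min_prod_chan[OF assms(1-4)] by (simp add: sum.distrib flip: sum_distrib_left)
qed

theorem lemma2:
  fixes X :: "'x measure" and W :: "'x \<Rightarrow> 'y::finite \<Rightarrow> real"
    and n :: nat and \<delta> \<epsilon> :: real and xs xs' :: "'x list"
  assumes "channel X W"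
    and "0 < \<delta>" and "\<delta> \<le> sqrt (real n) * log 2 (real CARD('y))"
    and "length xs = n" and "length xs' = n"
    and "set xs \<subseteq> space X" and "set xs' \<subseteq> space X"
    and "1 - l1_dist_prod W xs xs' / 2 \<le> \<epsilon>"
  shows "(\<Sum>ys\<in>typical_set W \<delta> xs. prod_chan W xs' ys)
    \<le> 2 * 2 powr (- \<delta>\<^sup>2 / (36 * Kfun (real CARD('y))))
      + \<epsilon> * (1 + 2 powr (2 * \<delta> * sqrt (real n)) * 2 powr (entropy_prod W xs - entropy_prod W xs'))"
proof -
  \<comment> \<open>the hypothesis bounding \<open>\<delta>\<close> is only needed to exclude \<open>n = 0\<close>\<close>
  have "xs' \<noteq> []" using assms(2,3,5) by auto
  define c where "c = 2 powr (2 * \<delta> * sqrt (real n)) * 2 powr (entropy_prod W xs - entropy_prod W xs')"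
  have "0 \<le> c" by (simp add: c_def)
  have "2 powr (\<delta> * sqrt (real n) - entropy_prod W xs')
      = c * 2 powr (- entropy_prod W xs - \<delta> * sqrt (real (length xs)))"
    by (simp add: c_def assms(4) algebra_simps flip: powr_add)
  then have "(\<Sum>ys\<in>typical_set W \<delta> xs. prod_chan W xs' ys)
      \<le> (1 + c) * (1 - l1_dist_prod W xs xs' / 2)
        + (\<Sum>ys\<in>{ys. length ys = n}. if 2 powr (\<delta> * sqrt (real n) - entropy_prod W xs') < prod_chan W xs' ys
           then prod_chan W xs' ys else 0)"
    using sum_typical_le_overlap_plus_tail[OF assms(1,6,7) _ \<open>0 \<le> c\<close>] assms(4,5) by simp
  also have "\<dots> \<le> \<epsilon> * (1 + c) + 2 powr (- \<delta>\<^sup>2 / (36 * Kfun (real CARD('y))))"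
    using prod_chan_upper_tail_le_Kfun[OF assms(1,7) _ \<open>xs' \<noteq> []\<close>] assms(2,5,8) \<open>0 \<le> c\<close>
    by (intro add_mono) (auto simp: mult.commute mult_right_mono)
  moreover have "0 \<le> 2 powr (- \<delta>\<^sup>2 / (36 * Kfun (real CARD('y))))" by simp
  ultimately show ?thesis unfolding c_def by linarith
qed

end
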